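(* Let $p$ be an odd prime, let $G$ be a proper multiplicative subgroup of $\mathbb{F}_p^*$ with $|G|\ge 3$, and let $\xi,\mu\in\mathbb{F}_p^*$. Then: (1) for every $A\subseteq\mathbb{F}_p^*$, we have $A/A\neq (\xi G+\mu)\setminus\{0\}$; (2) for every $A\subseteq\mathbb{F}_p^*$, we have $A/A\neq \big((\xi G\cup\{0\})+\mu\big)\setminus\{0\}$.
   Context: $\mathbb{F}_p$ is the field with $p$ elements and $\mathbb{F}_p^*=\mathbb{F}_p\setminus\{0\}$. For $A\subseteq\mathbb{F}_p^*$, the ratio set is $A/A=\{a/b: a,b\in A\}$. For a set $S\subseteq\mathbb{F}_p$, $\xi S=\{\xi s: s\in S\}$ and $S+\mu=\{s+\mu: s\in S\}$. *)

theory Defs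
  imports "HOL-Computational_Algebra.Primes"
begin

definition ratio_set :: "'a::field set \<Rightarrow> 'a set" where
  "ratio_set A = {a / b | a b. a \<in> A \<and> b \<in> A}"

definition mult_subgroup :: "'a::field set \<Rightarrow> bool" where
  "mult_subgroup G \<longleftrightarrow> G \<subseteq> UNIV - {0} \<and> 1 \<in> G \<and>
     (\<forall>x\<in>G. \<forall>y\<in>G. x * y \<in> G) \<and> (\<forall>x\<in>G. inverse x \<in> G)"

end

theory Submission
  imports Defs "HOL-Computational_Algebra.Polynomial"
begin

(*
  Put w = -mu and n = |G|. Every element x of R = xi G + mu satisfies (x + w)^n = xi^n, and every
  element of R = (xi G + mu) with mu added satisfies (x + w)^(n+1) = xi^n (x + w); in both cases R
  is a set of m = deg P roots of P = (X + w)^m - c (X + w)^j with j <= 1.  A ratio set avoids 0, contains 1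
  and is closed under inversion.  If A/A = R - {0} and 0 is not in R, the reversed polynomial of P
  vanishes on the same deg P points, hence is a scalar multiple of P; if 0 is in R, the same holds
  for P / X.  The resulting relations between the leading and the trailing coefficients of P, which
  are binomial coefficients times powers of w and are nonzero because p > 2n, force polynomial
  identities in w that are contradictory except for n = 3 and n = 4, where evaluating at the root
  1 finishes the argument.  The hypothesis that p is odd is implied by |G| >= 3 and not used.
*)

section \<open>Reciprocal polynomials\<close>

lemma smult_reflect_poly_eq_if_inverse_closed_roots:
  fixes P :: "'a::field poly"
  assumes "finite S" "0 \<notin> S" "\<And>x. x \<in> S \<Longrightarrow> inverse x \<in> S"
    and "card S = degree P" "\<And>x. x \<in> S \<Longrightarrow> poly P x = 0"
  shows "smult (lead_coeff P) (reflect_poly P) = smult (coeff P 0) P"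
proof (rule ccontr)
  define Q where "Q = smult (lead_coeff P) (reflect_poly P) - smult (coeff P 0) P"
  assume "\<not> ?thesis"
  then have "Q \<noteq> 0" by (simp add: Q_def)
  have "degree Q \<le> degree P"
    unfolding Q_def
    by (intro degree_diff_le) (auto intro: order.trans[OF degree_smult_le] degree_reflect_poly_le)
  moreover have "coeff Q (degree P) = 0"
    by (simp add: Q_def coeff_reflect_poly)
  ultimately have "degree Q < degree P"
    using \<open>Q \<noteq> 0\<close> by (metis le_neq_implies_less leading_coeff_0_iff)
  have "poly (reflect_poly P) x = 0" if "x \<in> S" for x
  proof -
    have "x \<noteq> 0" using that assms(2) by auto
    then show ?thesis using that assms(3,5) by (simp add: poly_reflect_poly_nz)
  qed
  then have "S \<subseteq> {x. poly Q x = 0}"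
    using assms(5) by (auto simp: Q_def)
  then have "card S \<le> card {x. poly Q x = 0}"
    using \<open>Q \<noteq> 0\<close> by (intro card_mono poly_roots_finite)
  also have "\<dots> \<le> degree Q"
    using \<open>Q \<noteq> 0\<close> by (rule card_poly_roots_bound)
  finally show False
    using \<open>degree Q < degree P\<close> assms(4) by simp
qed

lemma coeff_reciprocity_if_inverse_closed_roots:
  fixes P :: "'a::field poly"
  assumes "finite S" "0 \<notin> S" "\<And>x. x \<in> S \<Longrightarrow> inverse x \<in> S"
    and "card S = degree P" "\<And>x. x \<in> S \<Longrightarrow> poly P x = 0" "k \<le> degree P"
  shows "lead_coeff P * coeff P (degree P - k) = coeff P 0 * coeff P k"
  using arg_cong[OF smult_reflect_poly_eq_if_inverse_closed_roots[OF assms(1-5)], of "\<lambda>Q. coeff Q k"]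
    assms(6) by (simp add: coeff_reflect_poly)

lemma coeff_reciprocity_if_inverse_closed_roots_pCons_0:
  fixes P :: "'a::field poly"
  assumes "finite S" "0 \<notin> S" "\<And>x. x \<in> S \<Longrightarrow> inverse x \<in> S"
    and "card S = degree P - 1" "\<And>x. x \<in> S \<Longrightarrow> poly P x = 0" "coeff P 0 = 0" "k < degree P"
  shows "lead_coeff P * coeff P (degree P - k) = coeff P 1 * coeff P (Suc k)"
proof -
  obtain Q where P: "P = pCons 0 Q"
    using assms(6) by (metis coeff_pCons_0 pCons_cases)
  then have "Q \<noteq> 0" and deg: "degree P = Suc (degree Q)"
    using assms(7) by auto
  have "poly Q x = 0" if "x \<in> S" for x
  proof -
    have "x \<noteq> 0" "poly P x = 0" using that assms(2,5) by auto
    then show ?thesis by (simp add: P)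
  qed
  then have "lead_coeff Q * coeff Q (degree Q - k) = coeff Q 0 * coeff Q k"
    using assms deg by (intro coeff_reciprocity_if_inverse_closed_roots) auto
  moreover have "k \<le> degree Q"
    using assms(7) deg by simp
  ultimately show ?thesis
    using \<open>Q \<noteq> 0\<close> by (simp add: P Suc_diff_le)
qed

definition shifted_power_diff :: "nat \<Rightarrow> nat \<Rightarrow> 'a \<Rightarrow> 'a \<Rightarrow> 'a::comm_ring_1 poly" where
  "shifted_power_diff m j w c = [:w, 1:] ^ m - smult c ([:w, 1:] ^ j)"

lemma poly_shifted_power_diff [simp]:
  "poly (shifted_power_diff m j w c) x = (x + w) ^ m - c * (x + w) ^ j"
  by (simp add: shifted_power_diff_def poly_power add.commute)

lemma coeff_monic_linear_power:
  fixes w :: "'a::comm_ring_1"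
  shows "coeff ([:w, 1:] ^ m) k = of_nat (m choose k) * w ^ (m - k)"
proof (cases "k \<le> m")
  case False
  then show ?thesis by (simp add: coeff_eq_0 degree_linear_power binomial_eq_0)
qed (simp add: coeff_linear_poly_power)

lemma coeff_shifted_power_diff:
  "coeff (shifted_power_diff m j w c) k =
     of_nat (m choose k) * w ^ (m - k) - c * (of_nat (j choose k) * w ^ (j - k))"
  by (simp add: shifted_power_diff_def coeff_monic_linear_power)

lemma coeff_shifted_power_diff_above:
  "j < k \<Longrightarrow> coeff (shifted_power_diff m j w c) k = of_nat (m choose k) * w ^ (m - k)"
  by (simp add: coeff_shifted_power_diff binomial_eq_0)

lemma degree_shifted_power_diff:
  fixes w c :: "'a::field"
  assumes "j < m"
  shows "degree (shifted_power_diff m j w c) = m" "lead_coeff (shifted_power_diff m j w c) = 1"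
proof -
  have "degree (shifted_power_diff m j w c) \<le> m"
    unfolding shifted_power_diff_def using assms
    by (intro degree_diff_le) (auto simp: degree_linear_power)
  moreover have "coeff (shifted_power_diff m j w c) m = 1"
    using assms by (simp add: coeff_shifted_power_diff_above)
  ultimately show "degree (shifted_power_diff m j w c) = m"
    by (metis le_antisym le_degree one_neq_zero)
  then show "lead_coeff (shifted_power_diff m j w c) = 1"
    using \<open>coeff _ m = 1\<close> by simp
qed

section \<open>Inverse-closed sets of roots of (X + w)^m - c (X + w)^j\<close>

lemma of_nat_choose_neq_0:
  assumes "\<And>k. 0 < k \<Longrightarrow> k \<le> m \<Longrightarrow> of_nat k \<noteq> (0::'a::idom)" "i \<le> m"
  shows "of_nat (m choose i) \<noteq> (0::'a)"
proof -
  have "(of_nat (fact m) :: 'a) = (\<Prod>k\<in>{1..m}. of_nat k)"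
    by (simp add: fact_prod)
  also have "\<dots> \<noteq> 0"
    using assms(1) by auto
  finally have "(of_nat (fact i * fact (m - i) * (m choose i)) :: 'a) \<noteq> 0"
    by (simp only: binomial_fact_lemma[OF assms(2)] not_False_eq_True)
  then show ?thesis
    by simp
qed

lemma power_reciprocity_pair_imp:
  fixes w a :: "'a::field"
  assumes "w \<noteq> 0" "Suc k \<le> m"
    and "w ^ k = a * w ^ (m - k)" "w ^ Suc k = a * w ^ (m - Suc k)"
  shows "a * w ^ m = 1"
proof -
  define v where "v = w ^ (m - Suc k)"
  have "w ^ (m - k) = w * v"
    using assms(2) by (simp add: v_def Suc_diff_Suc flip: power_Suc)
  then have "a * v * w\<^sup>2 = a * v"
    using assms(3,4) by (simp add: v_def power2_eq_square algebra_simps)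
  moreover have "a * v \<noteq> 0"
    using assms(1,4) unfolding v_def by (metis power_not_zero)
  ultimately have "w\<^sup>2 = 1"
    by simp
  have "a * v = w ^ Suc k"
    using assms(4) by (simp add: v_def)
  have "w ^ m = w ^ Suc k * v"
    unfolding v_def power_add[symmetric] using assms(2) by simp
  then have "a * w ^ m = w ^ Suc k * (a * v)"
    by (simp only: mult_ac)
  also have "\<dots> = (w\<^sup>2) ^ Suc k"
    unfolding \<open>a * v = w ^ Suc k\<close> power2_eq_square power_mult_distrib ..
  finally show ?thesis
    using \<open>w\<^sup>2 = 1\<close> by simp
qed

lemma no_inverse_closed_roots:
  fixes w c :: "'a::field"
  assumes "finite S" "0 \<notin> S" "\<And>x. x \<in> S \<Longrightarrow> inverse x \<in> S" "card S = m"
    and "\<And>x. x \<in> S \<Longrightarrow> (x + w) ^ m = c * (x + w) ^ j"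
    and "2 * j + 3 \<le> m" "w \<noteq> 0" "c \<noteq> 0"
    and "\<And>k. 0 < k \<Longrightarrow> k \<le> m \<Longrightarrow> of_nat k \<noteq> (0::'a)"
  shows False
proof -
  define P where "P = shifted_power_diff m j w c"
  define a0 where "a0 = coeff P 0"
  have "j < m"
    using assms(6) by simp
  then have deg: "degree P = m" "lead_coeff P = 1"
    unfolding P_def by (rule degree_shifted_power_diff)+
  have rel: "coeff P (m - k) = a0 * coeff P k" if "k \<le> m" for k
    using coeff_reciprocity_if_inverse_closed_roots[of S P k] assms(1-5) that deg
    by (simp add: P_def a0_def)
  have middle: "w ^ k = a0 * w ^ (m - k)" if "j < k" "j < m - k" for k
  proof -
    have "of_nat (m choose k) * w ^ k = of_nat (m choose k) * (a0 * w ^ (m - k))"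
      using rel[of k] that by (simp add: P_def coeff_shifted_power_diff_above flip: binomial_symmetric)
    moreover have "of_nat (m choose k) \<noteq> (0::'a)"
      using that by (intro of_nat_choose_neq_0 assms(9)) auto
    ultimately show ?thesis
      by simp
  qed
  have "a0 * w ^ m = 1"
    using assms(6,7) by (intro power_reciprocity_pair_imp[of w "Suc j"] middle) auto
  moreover have "a0 * a0 = 1"
    using rel[of 0] deg by (simp add: a0_def)
  ultimately have "a0 = w ^ m"
    by (metis mult.assoc mult_1)
  moreover have "a0 = w ^ m - c * w ^ j"
    by (simp add: a0_def P_def coeff_shifted_power_diff)
  ultimately show False
    using assms(7,8) by simp
qed

lemma of_nat_choose_2: "2 * of_nat (m choose 2) = (of_nat m * (of_nat m - 1) :: 'a::comm_ring_1)"
proof (induction m)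
  case (Suc m)
  have "Suc m choose 2 = m + (m choose 2)"
    by (simp add: numeral_2_eq_2)
  then show ?case
    using Suc by (simp add: algebra_simps)
qed (simp add: numeral_2_eq_2)

lemma of_nat_choose_3:
  "6 * of_nat (m choose 3) = (of_nat m * (of_nat m - 1) * (of_nat m - 2) :: 'a::comm_ring_1)"
proof (induction m)
  case (Suc m)
  have "Suc m choose 3 = (m choose 2) + (m choose 3)"
    by (simp add: numeral_3_eq_3 numeral_2_eq_2)
  then have "6 * of_nat (Suc m choose 3) =
      3 * (2 * of_nat (m choose 2)) + 6 * (of_nat (m choose 3) :: 'a)"
    by (simp add: algebra_simps)
  then show ?case
    using Suc by (simp add: of_nat_choose_2 algebra_simps)
qed (simp add: numeral_3_eq_3)

lemma of_nat_eq_of_nat_below_char: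
  assumes "\<And>k. 0 < k \<Longrightarrow> k \<le> N \<Longrightarrow> of_nat k \<noteq> (0::'a::ring_1)"
    and "a \<le> N" "b \<le> N" "of_nat a = (of_nat b :: 'a)"
  shows "a = b"
proof (rule ccontr)
  define d where "d = (if a \<le> b then b - a else a - b)"
  assume "a \<noteq> b"
  then have "0 < d" "d \<le> N"
    using assms(2,3) by (auto simp: d_def)
  moreover have "of_nat d = (0::'a)"
    using assms(4) by (auto simp: d_def of_nat_diff)
  ultimately show False
    using assms(1) by blast
qed

lemma coeff_1_shifted_power_diff_zero_root:
  fixes w c :: "'a::field"
  assumes "j \<le> 1" "j < m" "w \<noteq> 0" "w ^ m = c * w ^ j"
  shows "coeff (shifted_power_diff m j w c) 1 = of_nat (m - j) * w ^ (m - 1)"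
proof (cases "j = 0")
  case False
  then have "j = 1"
    using assms(1) by simp
  moreover have "w ^ m = w ^ (m - 1) * w"
    using assms(2) by (simp flip: power_Suc2)
  ultimately have "c = w ^ (m - 1)"
    using assms(3,4) by simp
  then show ?thesis
    using \<open>j = 1\<close> assms(2) by (simp add: coeff_shifted_power_diff of_nat_diff algebra_simps)
qed (simp add: coeff_shifted_power_diff)

lemma zero_root_reciprocity_equations:
  fixes w c :: "'a::field"
  assumes "finite S" "0 \<notin> S" "\<And>x. x \<in> S \<Longrightarrow> inverse x \<in> S" "card S = m - 1"
    and "\<And>x. x \<in> S \<Longrightarrow> (x + w) ^ m = c * (x + w) ^ j" and "w ^ m = c * w ^ j"
    and "j \<le> 1" "j + 3 \<le> m" "w \<noteq> 0"
  shows "1 = of_nat (m - j) ^ 2 * (w ^ (m - 3)) ^ 2 * w ^ 4"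
    and "of_nat m = of_nat (m - j) * of_nat (m choose 2) * (w ^ (m - 3)) ^ 2 * w ^ 2"
    and "of_nat (m choose 2) = of_nat (m - j) * of_nat (m choose 3) * (w ^ (m - 3)) ^ 2"
proof -
  define P where "P = shifted_power_diff m j w c"
  have "j < m"
    using assms(8) by simp
  then have deg: "degree P = m" "lead_coeff P = 1"
    unfolding P_def by (rule degree_shifted_power_diff)+
  have "coeff P 0 = 0"
    using assms(6) by (simp add: P_def coeff_shifted_power_diff)
  moreover have "poly P x = 0" if "x \<in> S" for x
    using assms(5) that by (simp add: P_def)
  ultimately have rel: "coeff P (m - k) = coeff P 1 * coeff P (Suc k)" if "k < m" for k
    using coeff_reciprocity_if_inverse_closed_roots_pCons_0[of S P k] assms(1-4) that deg
    by simp
  define u where "u = w ^ (m - 3)"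
  define M where "M = (of_nat m :: 'a)"
  define K where "K = (of_nat (m - j) :: 'a)"
  define C2 where "C2 = (of_nat (m choose 2) :: 'a)"
  define C3 where "C3 = (of_nat (m choose 3) :: 'a)"
  have pow: "w ^ (m - 1) = u * w\<^sup>2" "w ^ (m - 2) = u * w"
  proof -
    define i where "i = m - 3"
    then have "m = i + 3"
      using assms(8) by simp
    then show "w ^ (m - 1) = u * w\<^sup>2" "w ^ (m - 2) = u * w"
      by (simp_all add: u_def i_def[symmetric] power_add power2_eq_square)
  qed
  have a1: "coeff P 1 = K * u * w\<^sup>2"
    using coeff_1_shifted_power_diff_zero_root[OF assms(7) \<open>j < m\<close> assms(9,6)] pow(1)
    by (simp add: P_def K_def)
  have a2: "coeff P 2 = C2 * u * w" and a3: "coeff P 3 = C3 * u"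
    using assms(7) pow(2) by (simp_all add: P_def coeff_shifted_power_diff_above C2_def C3_def u_def)
  have "m choose (m - 1) = m" "m choose (m - 2) = m choose 2"
    using assms(8) binomial_symmetric[of 1 m] binomial_symmetric[of 2 m] by simp_all
  then have am1: "coeff P (m - 1) = M * w" and am2: "coeff P (m - 2) = C2 * w\<^sup>2"
    using assms(7,8) by (simp_all add: P_def coeff_shifted_power_diff_above M_def C2_def)
  show "1 = K\<^sup>2 * u\<^sup>2 * w ^ 4"
    using rel[of 0] deg a1 assms(8) by (simp add: power2_eq_square power4_eq_xxxx mult_ac)
  have "coeff P (m - 1) = coeff P 1 * coeff P 2"
    using rel[of 1] assms(8) by (simp add: numeral_2_eq_2)
  then have "M * w = (K * C2 * u\<^sup>2 * w\<^sup>2) * w"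
    unfolding am1 a1 a2 by (simp add: power2_eq_square mult_ac)
  then show "M = K * C2 * u\<^sup>2 * w\<^sup>2"
    using assms(9) by simp
  have "coeff P (m - 2) = coeff P 1 * coeff P 3"
    using rel[of 2] assms(8) by (simp add: numeral_3_eq_3)
  then have "C2 * w\<^sup>2 = (K * C3 * u\<^sup>2) * w\<^sup>2"
    unfolding am2 a1 a3 by (simp add: power2_eq_square mult_ac)
  then show "C2 = K * C3 * u\<^sup>2"
    using assms(9) by simp
qed

lemma zero_root_equations_imp:
  fixes M K C2 C3 u w :: "'a::field"
  assumes "M \<noteq> 0" "M - 1 \<noteq> 0" "2 * C2 = M * (M - 1)" "6 * C3 = M * (M - 1) * (M - 2)"
    and "1 = K\<^sup>2 * u\<^sup>2 * w ^ 4" "M = K * C2 * u\<^sup>2 * w\<^sup>2" "C2 = K * C3 * u\<^sup>2"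
  shows "2 = K * (M - 1) * u\<^sup>2 * w\<^sup>2" "3 * (M - 1)\<^sup>2 = 4 * K * (M - 2)"
proof -
  have "M * (2 - K * (M - 1) * u\<^sup>2 * w\<^sup>2) = 0"
    using assms(3,6) by algebra
  then show A: "2 = K * (M - 1) * u\<^sup>2 * w\<^sup>2"
    using assms(1) by simp
  have "M * (M - 1) * (3 - K * (M - 2) * u\<^sup>2) = 0"
    using assms(3,4,7) by algebra
  then have B: "3 = K * (M - 2) * u\<^sup>2"
    using assms(1,2) by simp
  have "4 = (K * (M - 1) * u\<^sup>2 * w\<^sup>2)\<^sup>2"
    by (simp flip: A)
  also have "\<dots> = (M - 1)\<^sup>2 * u\<^sup>2 * (K\<^sup>2 * u\<^sup>2 * w ^ 4)"
    by algebra
  finally have four: "4 = (M - 1)\<^sup>2 * u\<^sup>2"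
    by (simp flip: assms(5))
  have "3 * (M - 1)\<^sup>2 = (K * (M - 2) * u\<^sup>2) * (M - 1)\<^sup>2"
    by (simp flip: B)
  also have "\<dots> = K * (M - 2) * ((M - 1)\<^sup>2 * u\<^sup>2)"
    by algebra
  also have "\<dots> = 4 * K * (M - 2)"
    unfolding four[symmetric] by (simp only: ac_simps)
  finally show "3 * (M - 1)\<^sup>2 = 4 * K * (M - 2)" .
qed

lemma zero_root_reciprocity_cases:
  fixes w c :: "'a::field"
  assumes "finite S" "0 \<notin> S" "\<And>x. x \<in> S \<Longrightarrow> inverse x \<in> S" "card S = m - 1"
    and "\<And>x. x \<in> S \<Longrightarrow> (x + w) ^ m = c * (x + w) ^ j" and "w ^ m = c * w ^ j"
    and "j \<le> 1" "j + 3 \<le> m" "w \<noteq> 0"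
    and char: "\<And>k. 0 < k \<Longrightarrow> k \<le> m + 1 \<Longrightarrow> of_nat k \<noteq> (0::'a)"
  shows "j = 0 \<and> m = 3 \<and> 3 * w\<^sup>2 = 1 \<or> j = 1 \<and> m = 5 \<and> 2 * w\<^sup>2 = 1"
proof -
  define u where "u = w ^ (m - 3)"
  define M where "M = (of_nat m :: 'a)"
  define K where "K = (of_nat (m - j) :: 'a)"
  define C2 where "C2 = (of_nat (m choose 2) :: 'a)"
  define C3 where "C3 = (of_nat (m choose 3) :: 'a)"
  note eqs = zero_root_reciprocity_equations[OF assms(1-9), folded u_def M_def K_def C2_def C3_def]
  have "0 < m - 1" "m - 1 \<le> m + 1"
    using assms(8) by simp_all
  then have M0: "M \<noteq> 0" "M - 1 \<noteq> 0" "M + 1 \<noteq> 0"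
    using assms(8) char[of m] char[of "m - 1"] char[of "m + 1"]
    by (simp_all add: M_def of_nat_diff add.commute)
  have "2 * C2 = M * (M - 1)" "6 * C3 = M * (M - 1) * (M - 2)"
    unfolding C2_def C3_def M_def by (rule of_nat_choose_2 of_nat_choose_3)+
  note two_quad = zero_root_equations_imp[OF M0(1,2) this eqs]
  consider "j = 0" | "j = 1"
    using assms(7) by linarith
  then show ?thesis
  proof cases
    case 1
    have "(M - 3) * (M + 1) = 4 * M * (M - 2) - 3 * (M - 1)\<^sup>2"
      by algebra
    also have "\<dots> = 0"
      using two_quad(2) 1 by (simp add: K_def M_def)
    finally have "m = 3"
      using M0(3) assms(8) char
      by (intro of_nat_eq_of_nat_below_char[of "m + 1"]) (simp_all add: M_def)
    then have "2 * (3 * w\<^sup>2) = 2 * 1"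
      using two_quad(1) 1 by (simp add: u_def K_def M_def)
    moreover have "(2::'a) \<noteq> 0"
      using assms(8) char[of 2] by simp
    ultimately show ?thesis
      using 1 \<open>m = 3\<close> mult_left_cancel[of "2::'a"] by blast
  next
    case 2
    then have "K = M - 1"
      using assms(8) by (simp add: K_def M_def of_nat_diff)
    have "(M - 1) * (M - 5) = 4 * K * (M - 2) - 3 * (M - 1)\<^sup>2"
      unfolding \<open>K = M - 1\<close> by algebra
    also have "\<dots> = 0"
      using two_quad(2) by simp
    finally have "m = 5"
      using M0(2) assms(8) char 2
      by (intro of_nat_eq_of_nat_below_char[of "m + 1"]) (simp_all add: M_def)
    have "2 * w\<^sup>2 = (K * (M - 1) * u\<^sup>2 * w\<^sup>2) * w\<^sup>2"
      by (simp flip: two_quad(1))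
    also have "\<dots> = K\<^sup>2 * u\<^sup>2 * w ^ 4"
      unfolding \<open>K = M - 1\<close> by algebra
    also have "\<dots> = 1"
      using eqs(1) by simp
    finally show ?thesis
      using 2 \<open>m = 5\<close> by simp
  qed
qed

lemma no_inverse_closed_roots_but_zero:
  fixes w c :: "'a::field"
  assumes "finite S" "0 \<notin> S" "\<And>x. x \<in> S \<Longrightarrow> inverse x \<in> S" "card S = m - 1"
    and "\<And>x. x \<in> S \<Longrightarrow> (x + w) ^ m = c * (x + w) ^ j" and "w ^ m = c * w ^ j"
    and "j \<le> 1" "j + 3 \<le> m" "w \<noteq> 0" "1 \<in> S"
    and char: "\<And>k. 0 < k \<Longrightarrow> k \<le> m + 1 \<Longrightarrow> of_nat k \<noteq> (0::'a)"
  shows False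
proof -
  have root1: "(1 + w) ^ m = c * (1 + w) ^ j"
    using assms(5,10) by (simp add: add.commute)
  have "(2::'a) \<noteq> 0" "(3::'a) \<noteq> 0"
    using assms(8) char[of 2] char[of 3] by simp_all
  have "j = 0 \<and> m = 3 \<and> 3 * w\<^sup>2 = 1 \<or> j = 1 \<and> m = 5 \<and> 2 * w\<^sup>2 = 1"
    using assms(1-9) char by (rule zero_root_reciprocity_cases)
  then show False
  proof (elim disjE conjE)
    assume "j = 0" "m = 3" and w: "3 * w\<^sup>2 = 1"
    then have "(1 + w) ^ 3 = w ^ 3"
      using root1 assms(6) by simp
    then show False
      using w \<open>(3::'a) \<noteq> 0\<close> by algebra
  next
    assume "j = 1" "m = 5" and w: "2 * w\<^sup>2 = 1"
    then have "c = w ^ 4"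
      using assms(6,9) by (simp add: eval_nat_numeral)
    then have "(1 + w) ^ 5 = w ^ 4 * (1 + w)"
      using root1 \<open>j = 1\<close> \<open>m = 5\<close> by simp
    then show False
      using w \<open>(2::'a) \<noteq> 0\<close> by algebra
  qed
qed

lemma quartic_reciprocity_system_absurd:
  fixes w c :: "'a::field"
  assumes "(2::'a) \<noteq> 0" "(3::'a) \<noteq> 0" "c \<noteq> 0"
    and "4 * w = 4 * w ^ 3 - c" "w ^ 4 - c * w = 1" "(1 + w) ^ 4 = c * (1 + w)"
  shows False
proof -
  have c: "c = 4 * w * (w - 1) * (w + 1)"
    using assms(4) by algebra
  have "(3 * w\<^sup>2 - 1) * (w\<^sup>2 - 1) = 0"
    using assms(5) c by algebra
  have "1 + w \<noteq> 0"
    using assms(3) c by (auto simp: add_eq_0_iff)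
  moreover have "(1 + w)\<^sup>2 * ((1 + w)\<^sup>2 - 4 * w * (w - 1)) = 0"
    using assms(6) c by algebra
  ultimately have "3 * w\<^sup>2 - 6 * w - 1 = 0"
    by algebra
  consider "3 * w\<^sup>2 = 1" | "w\<^sup>2 = 1"
    using \<open>(3 * w\<^sup>2 - 1) * (w\<^sup>2 - 1) = 0\<close> by auto
  then show False
  proof cases
    case 1
    then have "2 * 3 * w = 0"
      using \<open>3 * w\<^sup>2 - 6 * w - 1 = 0\<close> by algebra
    moreover have "(2::'a) * 3 \<noteq> 0"
      using assms(1,2) mult_eq_0_iff[of "2::'a" 3] by blast
    ultimately show False
      using 1 by simp
  next
    case 2
    then have "2 * (3 * w - 1) = 0"
      using \<open>3 * w\<^sup>2 - 6 * w - 1 = 0\<close> by algebra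
    then have "3 * w - 1 = 0"
      using assms(1) by (metis mult_eq_0_iff)
    have "2 * (2 * 2) = (3 * w + 1) * (3 * w - 1) - 9 * (w\<^sup>2 - 1)"
      by algebra
    also have "\<dots> = 0"
      using \<open>3 * w - 1 = 0\<close> 2 by simp
    finally show False
      using assms(1) by (metis mult_eq_0_iff)
  qed
qed

(* (m, j) = (4, 1) is the only case with j \<le> 1 and j + 3 \<le> m not covered by
   no_inverse_closed_roots: P has a single middle coefficient, so the root 1 must be used. *)
lemma no_inverse_closed_roots_4_1:
  fixes w c :: "'a::field"
  assumes "finite S" "0 \<notin> S" "\<And>x. x \<in> S \<Longrightarrow> inverse x \<in> S" "card S = 4"
    and "\<And>x. x \<in> S \<Longrightarrow> (x + w) ^ 4 = c * (x + w)" and "1 \<in> S"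
    and "w \<noteq> 0" "c \<noteq> 0" "(2::'a) \<noteq> 0" "(3::'a) \<noteq> 0"
  shows False
proof -
  define P where "P = shifted_power_diff 4 1 w c"
  have deg: "degree P = 4" "lead_coeff P = 1"
    unfolding P_def by (rule degree_shifted_power_diff; simp)+
  have rel: "coeff P (4 - k) = coeff P 0 * coeff P k" if "k \<le> 4" for k
    using coeff_reciprocity_if_inverse_closed_roots[of S P k] assms(1-5) that deg
    by (simp add: P_def)
  have coeffs: "coeff P 0 = w ^ 4 - c * w" "coeff P 1 = 4 * w ^ 3 - c"
    "coeff P 2 = 6 * w\<^sup>2" "coeff P 3 = 4 * w"
    by (simp_all add: P_def coeff_shifted_power_diff numeral_eq_Suc)
  have "(2::'a) * 3 \<noteq> 0"
    using assms(9,10) mult_eq_0_iff[of "2::'a" 3] by blast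
  then have "w ^ 4 - c * w = 1"
    using rel[of 2] coeffs assms(7) by simp
  moreover from this have "4 * w = 4 * w ^ 3 - c"
    using rel[of 1] coeffs by simp
  moreover have "(1 + w) ^ 4 = c * (1 + w)"
    using assms(5)[OF assms(6)] by (simp add: add.commute)
  ultimately show False
    using quartic_reciprocity_system_absurd assms(8-10) by blast
qed

lemma no_inverse_closed_punctured_root_set:
  fixes w c :: "'a::field"
  assumes "finite R" "card R = m" "\<And>x. x \<in> R \<Longrightarrow> (x + w) ^ m = c * (x + w) ^ j"
    and "1 \<in> R" "\<And>x. x \<in> R - {0} \<Longrightarrow> inverse x \<in> R - {0}"
    and "j \<le> 1" "j + 3 \<le> m" "w \<noteq> 0" "c \<noteq> 0"
    and char: "\<And>k. 0 < k \<Longrightarrow> k \<le> m + 1 \<Longrightarrow> of_nat k \<noteq> (0::'a)"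
  shows False
proof (cases "0 \<in> R")
  case True
  then have "w ^ m = c * w ^ j"
    using assms(3)[of 0] by simp
  moreover have "card (R - {0}) = m - 1"
    using assms(1,2) True by simp
  ultimately show False
    using assms(1,3-10)
    by (intro no_inverse_closed_roots_but_zero[of "R - {0}" m w c j]) auto
next
  case False
  then have R: "R - {0} = R"
    by simp
  show False
  proof (cases "2 * j + 3 \<le> m")
    case True
    then show False
      using assms(1-3,5,8-10) R \<open>0 \<notin> R\<close>
      by (intro no_inverse_closed_roots[of R m w c j]) auto
  next
    case False
    then have "j = 1" "m = 4"
      using assms(6,7) by auto
    moreover have "(2::'a) \<noteq> 0" "(3::'a) \<noteq> 0"
      using char[of 2] char[of 3] \<open>m = 4\<close> by simp_all
    ultimately show False
      using assms(1-5,8,9) R \<open>0 \<notin> R\<close>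
      by (intro no_inverse_closed_roots_4_1[of R w c]) auto
  qed
qed

section \<open>Ratio sets and subgroups of prime fields\<close>

lemma ratio_set_empty [simp]: "ratio_set {} = {}"
  by (simp add: ratio_set_def)

lemma one_mem_ratio_set: "a \<in> A \<Longrightarrow> a \<noteq> 0 \<Longrightarrow> 1 \<in> ratio_set A"
  unfolding ratio_set_def by (auto intro!: exI[of _ a])

lemma inverse_mem_ratio_set:
  assumes "x \<in> ratio_set A" shows "inverse x \<in> ratio_set A"
proof -
  obtain a b where "x = a / b" "a \<in> A" "b \<in> A"
    using assms unfolding ratio_set_def by blast
  then show ?thesis
    unfolding ratio_set_def by auto
qed

lemma ratio_set_neq_punctured_root_set:
  fixes w c :: "'a::field"
  assumes "A \<subseteq> UNIV - {0}"
    and "finite R" "card R = m" "\<And>x. x \<in> R \<Longrightarrow> (x + w) ^ m = c * (x + w) ^ j"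
    and "j \<le> 1" "j + 3 \<le> m" "w \<noteq> 0" "c \<noteq> 0"
    and "\<And>k. 0 < k \<Longrightarrow> k \<le> m + 1 \<Longrightarrow> of_nat k \<noteq> (0::'a)"
  shows "ratio_set A \<noteq> R - {0}"
proof
  assume eq: "ratio_set A = R - {0}"
  have "R - {0} \<noteq> {}"
  proof
    assume "R - {0} = {}"
    then have "card R \<le> card {0::'a}"
      by (intro card_mono) auto
    then show False
      using assms(3,6) by simp
  qed
  then obtain a where "a \<in> A"
    using eq by (metis all_not_in_conv ratio_set_empty)
  then have "1 \<in> R"
    using one_mem_ratio_set[of a A] assms(1) eq by auto
  moreover have "inverse x \<in> R - {0}" if "x \<in> R - {0}" for x
    using inverse_mem_ratio_set[of x A] eq that by simp
  ultimately show False
    using no_inverse_closed_punctured_root_set[OF assms(2-4) _ _ assms(5-9)] by blast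
qed

lemma of_nat_card_eq_0: "of_nat (card (UNIV :: 'a::{finite,ring_1} set)) = (0::'a)"
proof -
  have "(\<Sum>x\<in>UNIV. x + 1) = (\<Sum>x\<in>UNIV. x :: 'a)"
    by (rule sum.reindex_bij_witness[of _ "\<lambda>x. x - 1" "\<lambda>x. x + 1"]) auto
  then show ?thesis
    by (simp add: sum.distrib)
qed

lemma of_nat_neq_0_below_prime_card:
  assumes "prime (card (UNIV :: 'a::{finite,field} set))" "0 < k" "k < card (UNIV :: 'a set)"
  shows "of_nat k \<noteq> (0::'a)"
proof
  have "CHAR('a) dvd card (UNIV :: 'a set)"
    by (simp add: of_nat_card_eq_0 flip: of_nat_eq_0_iff_char_dvd)
  then have "CHAR('a) = card (UNIV :: 'a set)"
    using assms(1) CHAR_not_1[where 'a='a] unfolding prime_nat_iff by (metis One_nat_def)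
  moreover assume "of_nat k = (0::'a)"
  ultimately have "card (UNIV :: 'a set) dvd k"
    by (simp add: of_nat_eq_0_iff_char_dvd)
  then show False
    using assms(2,3) by (simp add: nat_dvd_not_less)
qed

lemma mult_subgroup_pow_card:
  fixes G :: "'a::field set"
  assumes "finite G" "mult_subgroup G" "g \<in> G"
  shows "g ^ card G = 1"
proof -
  have "0 \<notin> G" "\<forall>x\<in>G. g * x \<in> G"
    using assms(2,3) by (auto simp: mult_subgroup_def)
  then have "g \<noteq> 0"
    using assms(3) by auto
  then have inj: "inj_on ((*) g) G"
    by (auto simp: inj_on_def)
  have "(*) g ` G = G"
    using \<open>\<forall>x\<in>G. g * x \<in> G\<close> card_image[OF inj] by (intro card_subset_eq assms(1)) auto
  then have "(\<Prod>x\<in>G. x) = (\<Prod>x\<in>G. g * x)"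
    using prod.reindex[OF inj, of id] by simp
  also have "\<dots> = g ^ card G * (\<Prod>x\<in>G. x)"
    by (simp add: prod.distrib)
  finally show ?thesis
    using \<open>0 \<notin> G\<close> assms(1) by (auto simp: prod_zero_iff)
qed

lemma mult_subgroup_card_le:
  fixes G :: "'a::{finite,field} set"
  assumes "mult_subgroup G" "G \<noteq> UNIV - {0}"
  shows "2 * card G \<le> card (UNIV :: 'a set) - 1"
proof -
  have G: "G \<subseteq> UNIV - {0}"
    using assms(1) by (auto simp: mult_subgroup_def)
  then obtain y where y: "y \<noteq> 0" "y \<notin> G"
    using assms(2) by blast
  have "(*) y ` G \<inter> G = {}"
  proof (intro equals0I)
    fix z assume "z \<in> (*) y ` G \<inter> G"
    then obtain g where "g \<in> G" "y * g \<in> G"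
      by auto
    then have "y * g * inverse g \<in> G" "g \<noteq> 0"
      using assms(1) G by (auto simp: mult_subgroup_def)
    then show False
      using y(2) by (simp add: mult.assoc)
  qed
  moreover have "inj_on ((*) y) G"
    using y(1) by (auto simp: inj_on_def)
  ultimately have "card ((*) y ` G \<union> G) = 2 * card G"
    by (simp add: card_Un_disjoint card_image)
  moreover have "card ((*) y ` G \<union> G) \<le> card (UNIV - {0::'a})"
    using G y(1) by (intro card_mono) auto
  ultimately show ?thesis
    by (simp add: card_Diff_singleton)
qed

lemma of_nat_neq_0_upto_twice_subgroup_card:
  fixes G :: "'a::{finite,field} set"
  assumes "prime (card (UNIV :: 'a set))" "mult_subgroup G" "G \<noteq> UNIV - {0}"
    and "0 < k" "k \<le> 2 * card G"
  shows "of_nat k \<noteq> (0::'a)"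
  using mult_subgroup_card_le[OF assms(2,3)] assms(1,4,5)
  by (intro of_nat_neq_0_below_prime_card) auto

theorem theorem1p11:
  fixes G :: "'a::{finite,field} set" and p :: nat and \<xi> \<mu> :: 'a
  assumes "prime p" and "odd p" and "card (UNIV :: 'a set) = p"
    and "mult_subgroup G" and "G \<noteq> UNIV - {0}" and "card G \<ge> 3"
    and "\<xi> \<noteq> 0" and "\<mu> \<noteq> 0"
  shows "(\<forall>A. A \<subseteq> UNIV - {0} \<longrightarrow>
            ratio_set A \<noteq> ((\<lambda>g. \<xi> * g + \<mu>) ` G) - {0})
       \<and> (\<forall>A. A \<subseteq> UNIV - {0} \<longrightarrow>
            ratio_set A \<noteq> ((\<lambda>g. g + \<mu>) ` (((\<lambda>g. \<xi> * g) ` G) \<union> {0})) - {0})"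
proof -
  define n where "n = card G"
  define T where "T = (\<lambda>g. \<xi> * g + \<mu>) ` G"
  have char: "of_nat k \<noteq> (0::'a)" if "0 < k" "k \<le> n + 2" for k
    using of_nat_neq_0_upto_twice_subgroup_card[OF _ assms(4,5)] assms(1,3,6) that
    by (simp add: n_def)
  have "card T = n"
    using assms(7) by (simp add: T_def n_def card_image inj_on_def)
  have root: "(x - \<mu>) ^ n = \<xi> ^ n" if "x \<in> T" for x
    using that mult_subgroup_pow_card[OF _ assms(4)] by (auto simp: T_def n_def power_mult_distrib)
  have "\<mu> \<notin> T"
    using assms(4,7) by (auto simp: T_def mult_subgroup_def)
  have "ratio_set A \<noteq> T - {0}" if "A \<subseteq> UNIV - {0}" for A
    using that assms(6-8) \<open>card T = n\<close> root char
    by (intro ratio_set_neq_punctured_root_set[of A T n "- \<mu>" "\<xi> ^ n" 0]) (auto simp: n_def)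
  moreover have "ratio_set A \<noteq> insert \<mu> T - {0}" if "A \<subseteq> UNIV - {0}" for A
    using that assms(6-8) \<open>card T = n\<close> \<open>\<mu> \<notin> T\<close> root char
    by (intro ratio_set_neq_punctured_root_set[of A "insert \<mu> T" "n + 1" "- \<mu>" "\<xi> ^ n" 1])
      (auto simp: n_def)
  moreover have "(\<lambda>g. g + \<mu>) ` ((\<lambda>g. \<xi> * g) ` G \<union> {0}) = insert \<mu> T"
    by (auto simp: T_def)
  ultimately show ?thesis
    by (simp add: T_def)
qed

end
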